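(* Let $p=\xi_1+i\operatorname{Im}p$ be a smooth function on $T^\ast(\mathbb{R}^n)\smallsetminus0$. Assume that $\operatorname{Im}p$ strongly changes sign from $-$ to $+$ on $\gamma=[a,b]\times\{w\}$ and that $L_p(\gamma)\ge|\gamma|-\varrho$ for some $0<\varrho<|\gamma|/2$. If $\operatorname{Im}p$ does not depend on $\xi_1$, then for every $\kappa>\varrho$ the function $\operatorname{Im}p$ vanishes identically in a neighborhood of $I_\kappa\times\{w\}$, where $I_\kappa=[a+\kappa,b-\kappa]$.
   Context: Write points of $T^\ast(\mathbb{R}^n)$ as $(x_1,x',\xi_1,\xi')$. A bicharacteristic of $\operatorname{Re}p=\xi_1$ is $\gamma=[a,b]\times\{w_0\}=\{(t,x',0,\xi'):a\le t\le b\}$ with $w_0=(x',0,\xi')$; functions are written $g(t,w)$; $|\gamma|=b-a$. For $\gamma_j=[a_j,b_j]\times\{w_j\}$, $\gamma_j\dashrightarrow\gamma$ means $\liminf a_j\ge a$, $\limsup b_j\le b$, $w_j\to w_0$. $\operatorname{Im}p$ strongly changes sign from $-$ to $+$ on $[a,b]\times\{w_0\}$ if $\operatorname{Im}p(t,w_0)=0$ for $a\le t\le b$ and for every $\varepsilon>0$ there exist $a-\varepsilon<s_-<a$, $b<s_+<b+\varepsilon$ with $\operatorname{Im}p(s_-,w_0)<0<\operatorname{Im}p(s_+,w_0)$. When some sequence of such bicharacteristics $\gamma_j$ with this sign change satisfies $\gamma_j\dashrightarrow\gamma$, $L_p(\gamma)=\inf\liminf_j|\gamma_j|$ over all such sequences.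 *)

theory Defs
  imports "HOL-Analysis.Analysis"
begin

text \<open>Points of T*(R^n) are written ((x1, x'), (xi1, xi')) with x', xi' in an
  (n-1)-dimensional euclidean space 'a.  The zero section is removed.\<close>

definition cotangent_minus_zero :: "((real \<times> 'a::euclidean_space) \<times> (real \<times> 'a)) set" where
  "cotangent_minus_zero = {z. snd z \<noteq> 0}"

fun iter_dderiv :: "'a::real_normed_vector list \<Rightarrow> ('a \<Rightarrow> real) \<Rightarrow> 'a \<Rightarrow> real" where
  "iter_dderiv [] f = f"
| "iter_dderiv (v # vs) f = (\<lambda>x. frechet_derivative (iter_dderiv vs f) (at x) v)"

definition smooth_on :: "'a::real_normed_vector set \<Rightarrow> ('a \<Rightarrow> real) \<Rightarrow> bool" where
  "smooth_on S f \<longleftrightarrow> open S \<and> (\<forall>vs. iter_dderiv vs f differentiable_on S)"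

definition along :: "((real \<times> 'a) \<times> (real \<times> 'a) \<Rightarrow> real) \<Rightarrow> real \<Rightarrow> 'a \<Rightarrow> 'a \<Rightarrow> real" where
  "along q t x' xi' = q ((t, x'), (0, xi'))"

text \<open>gamma = [a,b] x {(x',0,xi')} is a bicharacteristic of Re p = xi1 in T*(R^n) minus 0.\<close>
definition bichar :: "real \<Rightarrow> real \<Rightarrow> 'a::euclidean_space \<Rightarrow> 'a \<Rightarrow> bool" where
  "bichar a b x' xi' \<longleftrightarrow> a \<le> b \<and> xi' \<noteq> 0"

definition strongly_changes_sign ::
  "((real \<times> 'a) \<times> (real \<times> 'a) \<Rightarrow> real) \<Rightarrow> real \<Rightarrow> real \<Rightarrow> 'a \<Rightarrow> 'a \<Rightarrow> bool" where
  "strongly_changes_sign q a b x' xi' \<longleftrightarrow>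
     (\<forall>t\<in>{a..b}. along q t x' xi' = 0) \<and>
     (\<forall>\<epsilon>>0. \<exists>sm sp. a - \<epsilon> < sm \<and> sm < a \<and> b < sp \<and> sp < b + \<epsilon> \<and>
         along q sm x' xi' < 0 \<and> 0 < along q sp x' xi')"

definition bichar_conv ::
  "(nat \<Rightarrow> real) \<Rightarrow> (nat \<Rightarrow> real) \<Rightarrow> (nat \<Rightarrow> 'a::euclidean_space) \<Rightarrow> (nat \<Rightarrow> 'a)
   \<Rightarrow> real \<Rightarrow> real \<Rightarrow> 'a \<Rightarrow> 'a \<Rightarrow> bool" where
  "bichar_conv A B X Xi a b x' xi' \<longleftrightarrow>
     liminf (\<lambda>j. ereal (A j)) \<ge> ereal a \<and> limsup (\<lambda>j. ereal (B j)) \<le> ereal b \<and>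
     X \<longlonglongrightarrow> x' \<and> Xi \<longlonglongrightarrow> xi'"

definition Lp ::
  "((real \<times> 'a::euclidean_space) \<times> (real \<times> 'a) \<Rightarrow> real) \<Rightarrow> real \<Rightarrow> real \<Rightarrow> 'a \<Rightarrow> 'a \<Rightarrow> ereal" where
  "Lp q a b x' xi' = Inf {liminf (\<lambda>j. ereal (B j - A j)) | A B X Xi.
      (\<forall>j. bichar (A j) (B j) (X j) (Xi j) \<and> strongly_changes_sign q (A j) (B j) (X j) (Xi j)) \<and>
      bichar_conv A B X Xi a b x' xi'}"

end

theory Submission
  imports Defs
begin

text \<open>
  Suppose \<open>Im p\<close> does not vanish identically near some \<open>(t\<^sub>0, w\<^sub>0)\<close> with
  \<open>t\<^sub>0 \<in> I\<^sub>\<kappa>\<close>. The strong sign change supplies \<open>s\<^sub>- < a\<close> and \<open>s\<^sub>+ > b\<close>, arbitrarily close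
  to \<open>a\<close> and \<open>b\<close>, with \<open>Im p(s\<^sub>-, w\<^sub>0) < 0 < Im p(s\<^sub>+, w\<^sub>0)\<close>; by continuity these signs
  persist at nearby \<open>w\<close>, and there is such a \<open>w\<close> with \<open>Im p(t, w) \<noteq> 0\<close> for some \<open>t\<close>
  near \<open>t\<^sub>0\<close>. Independence of \<open>\<xi>\<^sub>1\<close> lets us take \<open>w\<close> in \<open>{\<xi>\<^sub>1 = 0}\<close>, so that
  \<open>[s\<^sub>-, s\<^sub>+] \<times> {w}\<close> is a bicharacteristic. By the intermediate value argument,
  \<open>Im p(\<cdot>, w)\<close> changes sign strongly on a subinterval of \<open>[s\<^sub>-, t]\<close> or of \<open>[t, s\<^sub>+]\<close>,
  both of length at most \<open>|\<gamma>| - \<kappa> + o(1)\<close>. These bicharacteristics converge to \<open>\<gamma>\<close>,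
  so \<open>L\<^sub>p(\<gamma>) \<le> |\<gamma>| - \<kappa> < |\<gamma>| - \<rho>\<close>, a contradiction.
\<close>

lemma last_negative_point:
  fixes g :: "real \<Rightarrow> real"
  assumes cont: "continuous_on {u..v} g" and "u \<le> v" and "g u < 0" and "0 \<le> g v"
  obtains c where "u \<le> c" "c \<le> v" "g c = 0" "\<And>s. c \<le> s \<Longrightarrow> s \<le> v \<Longrightarrow> 0 \<le> g s"
    "\<And>e. 0 < e \<Longrightarrow> \<exists>s. c - e < s \<and> s < c \<and> g s < 0"
proof -
  define N where "N = {s\<in>{u..v}. g s < 0}"
  define c where "c = Sup N"
  have "u \<in> N" using \<open>g u < 0\<close> \<open>u \<le> v\<close> by (simp add: N_def)
  then have ne: "N \<noteq> {}" by blast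
  have bdd: "bdd_above N" by (auto simp: N_def intro: bdd_aboveI[of _ v])
  have below_c: "s \<le> c" if "s \<in> N" for s
    using cSup_upper[OF that bdd] by (simp add: c_def)
  have "u \<le> c" using below_c[OF \<open>u \<in> N\<close>] .
  have "c \<le> v" unfolding c_def by (rule cSup_least[OF ne]) (auto simp: N_def)
  have nonneg: "0 \<le> g s" if "c < s" "s \<le> v" for s
  proof (rule ccontr)
    assume "\<not> 0 \<le> g s"
    with that \<open>u \<le> c\<close> have "s \<in> N" by (simp add: N_def)
    with below_c \<open>c < s\<close> show False by fastforce
  qed
  have "N \<subseteq> {u..v}" by (auto simp: N_def)
  then have "closure N \<subseteq> {u..v}" by (rule closure_minimal) simp
  then have "continuous_on (closure N) g" by (rule continuous_on_subset[OF cont])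
  moreover have "c \<in> closure N"
    using closure_contains_Sup[OF ne bdd] by (simp add: c_def)
  ultimately have "g c \<le> 0"
    by (rule continuous_le_on_closure) (simp add: N_def)
  moreover have "0 \<le> g c"
  proof (cases "c = v")
    case False
    with \<open>c \<le> v\<close> have closure: "closure {c<..v} = {c..v}" by simp
    have "continuous_on (closure {c<..v}) g"
      unfolding closure using \<open>u \<le> c\<close> by (intro continuous_on_subset[OF cont]) simp
    moreover have "c \<in> closure {c<..v}" using closure \<open>c \<le> v\<close> by simp
    ultimately show ?thesis
      by (rule continuous_ge_on_closure) (simp add: nonneg)
  qed (use \<open>0 \<le> g v\<close> in simp)
  ultimately have "g c = 0" by simp
  have "0 \<le> g s" if "c \<le> s" "s \<le> v" for s
    using nonneg[of s] that \<open>g c = 0\<close> by (cases "s = c") auto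
  moreover have "\<exists>s. c - e < s \<and> s < c \<and> g s < 0" if e: "0 < e" for e
  proof -
    obtain s where "s \<in> N" "c - e < s"
      using less_cSup_iff[OF ne bdd, of "c - e"] e by (auto simp: c_def)
    moreover have "s \<noteq> c" using \<open>s \<in> N\<close> \<open>g c = 0\<close> by (auto simp: N_def)
    ultimately show ?thesis using below_c[of s] by (auto simp: N_def)
  qed
  ultimately show ?thesis using that \<open>u \<le> c\<close> \<open>c \<le> v\<close> \<open>g c = 0\<close> by blast
qed

text \<open>Proved by applying the previous lemma to \<open>s \<mapsto> -g(-s)\<close>.\<close>

lemma first_positive_point:
  fixes g :: "real \<Rightarrow> real"
  assumes cont: "continuous_on {u..v} g" and "u \<le> v" and "g u \<le> 0" and "0 < g v"
  obtains d where "u \<le> d" "d \<le> v" "g d = 0" "\<And>s. u \<le> s \<Longrightarrow> s \<le> d \<Longrightarrow> g s \<le> 0"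
    "\<And>e. 0 < e \<Longrightarrow> \<exists>s. d < s \<and> s < d + e \<and> 0 < g s"
proof -
  have "continuous_on {-v..-u} (\<lambda>s. - g (- s))"
    by (rule continuous_on_minus, rule continuous_on_compose2[OF cont])
      (auto intro: continuous_intros)
  moreover have "-v \<le> -u" "- g (- (- v)) < 0" "0 \<le> - g (- (- u))"
    using assms by auto
  ultimately obtain c where c: "-v \<le> c" "c \<le> -u" "g (- c) = 0"
      "\<And>s. c \<le> s \<Longrightarrow> s \<le> -u \<Longrightarrow> 0 \<le> - g (- s)"
      "\<And>e. 0 < e \<Longrightarrow> \<exists>s. c - e < s \<and> s < c \<and> - g (- s) < 0"
    by (rule last_negative_point) auto
  have "g s \<le> 0" if "u \<le> s" "s \<le> -c" for s
    using c(4)[of "- s"] that by simp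
  moreover have "\<exists>s. - c < s \<and> s < - c + e \<and> 0 < g s" if e: "0 < e" for e
  proof -
    obtain s where "c - e < s" "s < c" "- g (- s) < 0" using c(5)[OF e] by blast
    then show ?thesis by (intro exI[of _ "- s"]) auto
  qed
  ultimately show ?thesis using that[of "- c"] c(1-3) by auto
qed

lemma strong_sign_change_in_interval:
  fixes g :: "real \<Rightarrow> real"
  assumes cont: "continuous_on {u..v} g" and "u \<le> v" and "g u < 0" and "0 < g v"
  obtains c d where "u \<le> c" "c \<le> d" "d \<le> v" "\<forall>s\<in>{c..d}. g s = 0"
    "\<forall>e>0. \<exists>sm sp. c - e < sm \<and> sm < c \<and> d < sp \<and> sp < d + e \<and> g sm < 0 \<and> 0 < g sp"
proof -
  obtain c where c: "u \<le> c" "c \<le> v" "g c = 0" "\<And>s. c \<le> s \<Longrightarrow> s \<le> v \<Longrightarrow> 0 \<le> g s"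
      "\<And>e. 0 < e \<Longrightarrow> \<exists>s. c - e < s \<and> s < c \<and> g s < 0"
    using cont \<open>u \<le> v\<close> \<open>g u < 0\<close> less_imp_le[OF \<open>0 < g v\<close>]
    by (rule last_negative_point) blast
  have cont_cv: "continuous_on {c..v} g"
    using \<open>u \<le> c\<close> by (intro continuous_on_subset[OF cont]) auto
  have "g c \<le> 0" using \<open>g c = 0\<close> by simp
  obtain d where d: "c \<le> d" "d \<le> v" "g d = 0" "\<And>s. c \<le> s \<Longrightarrow> s \<le> d \<Longrightarrow> g s \<le> 0"
      "\<And>e. 0 < e \<Longrightarrow> \<exists>s. d < s \<and> s < d + e \<and> 0 < g s"
    using cont_cv \<open>c \<le> v\<close> \<open>g c \<le> 0\<close> \<open>0 < g v\<close>
    by (rule first_positive_point) blast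
  have "\<forall>s\<in>{c..d}. g s = 0"
    using c(4) d(2,4) by (auto intro: antisym)
  moreover have "\<forall>e>0. \<exists>sm sp. c - e < sm \<and> sm < c \<and> d < sp \<and> sp < d + e \<and> g sm < 0 \<and> 0 < g sp"
    using c(5) d(5) by blast
  ultimately show ?thesis using that c(1) d(1,2) by blast
qed

lemma ereal_le_Liminf_of_lower_bounds:
  fixes f e :: "nat \<Rightarrow> real"
  assumes "\<And>j. c - e j \<le> f j" and "e \<longlonglongrightarrow> 0"
  shows "ereal c \<le> liminf (\<lambda>j. ereal (f j))"
proof -
  have "(\<lambda>j. ereal (c - e j)) \<longlonglongrightarrow> ereal c"
    using tendsto_diff[OF tendsto_const \<open>e \<longlonglongrightarrow> 0\<close>, of c] by (simp add: tendsto_ereal)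
  then have "ereal c = liminf (\<lambda>j. ereal (c - e j))"
    using lim_imp_Liminf by force
  also have "\<dots> \<le> liminf (\<lambda>j. ereal (f j))"
    using assms(1) by (intro Liminf_mono) simp
  finally show ?thesis .
qed

lemma Limsup_le_ereal_of_upper_bounds:
  fixes f e :: "nat \<Rightarrow> real"
  assumes "\<And>j. f j \<le> c + e j" and "e \<longlonglongrightarrow> 0"
  shows "limsup (\<lambda>j. ereal (f j)) \<le> ereal c"
proof -
  have "limsup (\<lambda>j. ereal (f j)) \<le> limsup (\<lambda>j. ereal (c + e j))"
    using assms(1) by (intro Limsup_mono) simp
  also have "(\<lambda>j. ereal (c + e j)) \<longlonglongrightarrow> ereal c"
    using tendsto_add[OF tendsto_const \<open>e \<longlonglongrightarrow> 0\<close>, of c] by (simp add: tendsto_ereal)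
  then have "limsup (\<lambda>j. ereal (c + e j)) = ereal c"
    using lim_imp_Limsup by force
  finally show ?thesis .
qed

lemma LIMSEQ_of_dist_le:
  assumes "\<And>j. dist (X j) x \<le> e j" and "e \<longlonglongrightarrow> 0"
  shows "X \<longlonglongrightarrow> x"
proof -
  have "\<forall>\<^sub>F j in sequentially. norm (dist (X j) x) \<le> e j"
    using assms(1) by (simp add: always_eventually)
  then have "(\<lambda>j. dist (X j) x) \<longlonglongrightarrow> 0"
    using \<open>e \<longlonglongrightarrow> 0\<close> by (rule Lim_null_comparison)
  then show ?thesis by (simp only: tendsto_dist_iff[of X x])
qed

lemma frequently_nhds_notin_if_notin_interior:
  assumes "x \<notin> interior S"
  shows "frequently (\<lambda>y. y \<notin> S) (nhds x)"
  unfolding frequently_def not_not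
proof
  assume "eventually (\<lambda>y. y \<in> S) (nhds x)"
  then obtain T where "open T" "x \<in> T" "\<forall>y\<in>T. y \<in> S"
    unfolding eventually_nhds by blast
  then have "x \<in> interior S" by (auto simp: interior_def)
  with assms show False by contradiction
qed

lemma open_cotangent_minus_zero: "open cotangent_minus_zero"
  unfolding cotangent_minus_zero_def by (intro open_Collect_neq continuous_intros)

lemma mem_cotangent_minus_zero: "\<zeta> \<noteq> 0 \<Longrightarrow> ((t, y), (\<eta>, \<zeta>)) \<in> cotangent_minus_zero"
  by (simp add: cotangent_minus_zero_def zero_prod_def)

lemma strongly_changes_sign_between:
  fixes q :: "(real \<times> 'a::euclidean_space) \<times> (real \<times> 'a) \<Rightarrow> real"
  assumes cont: "continuous_on {sm..sp} (\<lambda>s. along q s y \<zeta>)"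
    and "sm \<le> t" "t \<le> sp"
    and "along q sm y \<zeta> < 0" "along q t y \<zeta> \<noteq> 0" "0 < along q sp y \<zeta>"
  shows "\<exists>c d. c \<le> d \<and> (sm \<le> c \<and> d \<le> t \<or> t \<le> c \<and> d \<le> sp) \<and> strongly_changes_sign q c d y \<zeta>"
proof (cases "0 < along q t y \<zeta>")
  case True
  have "continuous_on {sm..t} (\<lambda>s. along q s y \<zeta>)"
    using \<open>t \<le> sp\<close> by (intro continuous_on_subset[OF cont]) auto
  then obtain c d where "sm \<le> c" "c \<le> d" "d \<le> t" "\<forall>s\<in>{c..d}. along q s y \<zeta> = 0"
      "\<forall>e>0. \<exists>s s'. c - e < s \<and> s < c \<and> d < s' \<and> s' < d + e \<and> along q s y \<zeta> < 0 \<and> 0 < along q s' y \<zeta>"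
    using \<open>sm \<le> t\<close> \<open>along q sm y \<zeta> < 0\<close> True by (rule strong_sign_change_in_interval)
  then show ?thesis unfolding strongly_changes_sign_def by blast
next
  case False
  with \<open>along q t y \<zeta> \<noteq> 0\<close> have "along q t y \<zeta> < 0" by simp
  have "continuous_on {t..sp} (\<lambda>s. along q s y \<zeta>)"
    using \<open>sm \<le> t\<close> by (intro continuous_on_subset[OF cont]) auto
  then obtain c d where "t \<le> c" "c \<le> d" "d \<le> sp" "\<forall>s\<in>{c..d}. along q s y \<zeta> = 0"
      "\<forall>e>0. \<exists>s s'. c - e < s \<and> s < c \<and> d < s' \<and> s' < d + e \<and> along q s y \<zeta> < 0 \<and> 0 < along q s' y \<zeta>"
    using \<open>t \<le> sp\<close> \<open>along q t y \<zeta> < 0\<close> \<open>0 < along q sp y \<zeta>\<close> by (rule strong_sign_change_in_interval)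
  then show ?thesis unfolding strongly_changes_sign_def by blast
qed

definition sign_change_bichar_near ::
  "((real \<times> 'a) \<times> (real \<times> 'a) \<Rightarrow> real) \<Rightarrow> real \<Rightarrow> real \<Rightarrow> 'a::euclidean_space \<Rightarrow> 'a
   \<Rightarrow> real \<Rightarrow> real \<Rightarrow> bool" where
  "sign_change_bichar_near q a b x' xi' L r \<longleftrightarrow>
     (\<exists>A B X Xi. bichar A B X Xi \<and> strongly_changes_sign q A B X Xi \<and>
        a - r < A \<and> B < b + r \<and> dist X x' < r \<and> dist Xi xi' < r \<and> B - A \<le> L + r)"

lemma Lp_le_if_sign_change_bichar_near:
  assumes near: "\<And>r. 0 < r \<Longrightarrow> sign_change_bichar_near q a b x' xi' L r"
  shows "Lp q a b x' xi' \<le> ereal L"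
proof -
  define r :: "nat \<Rightarrow> real" where "r j = inverse (real (Suc j))" for j
  have r0: "r \<longlonglongrightarrow> 0" unfolding r_def by (rule LIMSEQ_inverse_real_of_nat)
  have rpos: "0 < r j" for j by (simp add: r_def)
  have "\<forall>j. \<exists>A B X Xi. bichar A B X Xi \<and> strongly_changes_sign q A B X Xi \<and>
      a - r j < A \<and> B < b + r j \<and> dist X x' < r j \<and> dist Xi xi' < r j \<and> B - A \<le> L + r j"
    using near[OF rpos, unfolded sign_change_bichar_near_def] by blast
  then obtain A B X Xi where R: "\<forall>j. bichar (A j) (B j) (X j) (Xi j) \<and>
      strongly_changes_sign q (A j) (B j) (X j) (Xi j) \<and> a - r j < A j \<and> B j < b + r j \<and>
      dist (X j) x' < r j \<and> dist (Xi j) xi' < r j \<and> B j - A j \<le> L + r j"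
    by metis
  have "bichar_conv A B X Xi a b x' xi'"
    unfolding bichar_conv_def using R
    by (intro conjI ereal_le_Liminf_of_lower_bounds[OF _ r0] Limsup_le_ereal_of_upper_bounds[OF _ r0]
        LIMSEQ_of_dist_le[OF _ r0]) (simp_all add: less_imp_le)
  then have "Lp q a b x' xi' \<le> liminf (\<lambda>j. ereal (B j - A j))"
    unfolding Lp_def
    by (intro Inf_lower CollectI exI[of _ A] exI[of _ B] exI[of _ X] exI[of _ Xi]) (use R in simp)
  also have "\<dots> \<le> limsup (\<lambda>j. ereal (B j - A j))"
    by (rule Liminf_le_Limsup) simp
  also have "\<dots> \<le> ereal L"
    using R by (intro Limsup_le_ereal_of_upper_bounds[OF _ r0]) simp
  finally show ?thesis .
qed

lemma nonzero_point_with_sign_change_nearby: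
  fixes q :: "(real \<times> 'a::euclidean_space) \<times> (real \<times> 'a) \<Rightarrow> real"
  assumes cont: "continuous_on cotangent_minus_zero q" and "xi' \<noteq> 0"
    and neg: "q ((sm, x'), (0, xi')) < 0" and pos: "0 < q ((sp, x'), (0, xi'))"
    and not_zero: "((t0, x'), (0, xi')) \<notin> interior {z \<in> cotangent_minus_zero. q z = 0}"
    and "0 < \<delta>"
  obtains t y \<eta> \<zeta> where "\<zeta> \<noteq> 0" "q ((t, y), (\<eta>, \<zeta>)) \<noteq> 0"
    "along q sm y \<zeta> < 0" "0 < along q sp y \<zeta>" "\<bar>t - t0\<bar> < \<delta>" "dist y x' < \<delta>" "dist \<zeta> xi' < \<delta>"
proof -
  have isCont_q: "isCont q ((s, x'), (0, xi'))" for s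
    using continuous_on_eq_continuous_at[OF open_cotangent_minus_zero] cont
      mem_cotangent_minus_zero[OF \<open>xi' \<noteq> 0\<close>] by blast
  define z0 where "z0 = ((t0, x'), (0::real, xi'))"
  have id: "((\<lambda>z. z) \<longlongrightarrow> z0) (nhds z0)" by (rule filterlim_ident)
  define line :: "real \<Rightarrow> (real \<times> 'a) \<times> (real \<times> 'a) \<Rightarrow> (real \<times> 'a) \<times> (real \<times> 'a)"
    where "line s z = ((s, snd (fst z)), (0, snd (snd z)))" for s z
  have line: "((\<lambda>z. line s z) \<longlongrightarrow> ((s, x'), (0, xi'))) (nhds z0)" for s
    using tendsto_snd[OF tendsto_fst[OF id]] tendsto_snd[OF tendsto_snd[OF id]]
    by (auto simp: line_def z0_def intro!: tendsto_intros)
  have "eventually (\<lambda>z. q (line sm z) < 0) (nhds z0)"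
    using order_tendstoD(2)[OF isCont_tendsto_compose[OF isCont_q line] neg] .
  moreover have "eventually (\<lambda>z. 0 < q (line sp z)) (nhds z0)"
    using order_tendstoD(1)[OF isCont_tendsto_compose[OF isCont_q line] pos] .
  moreover have "eventually (\<lambda>z. dist (fst (fst z)) t0 < \<delta>) (nhds z0)"
    using tendstoD[OF tendsto_fst[OF tendsto_fst[OF id]]] \<open>0 < \<delta>\<close> by (simp add: z0_def)
  moreover have "eventually (\<lambda>z. dist (snd (fst z)) x' < \<delta>) (nhds z0)"
    using tendstoD[OF tendsto_snd[OF tendsto_fst[OF id]]] \<open>0 < \<delta>\<close> by (simp add: z0_def)
  moreover have "eventually (\<lambda>z. dist (snd (snd z)) xi' < min \<delta> (norm xi')) (nhds z0)"
    using tendstoD[OF tendsto_snd[OF tendsto_snd[OF id]], of "min \<delta> (norm xi')"] \<open>0 < \<delta>\<close> \<open>xi' \<noteq> 0\<close>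
    by (simp add: z0_def)
  ultimately have "eventually (\<lambda>z. q (line sm z) < 0 \<and> 0 < q (line sp z) \<and>
      dist (fst (fst z)) t0 < \<delta> \<and> dist (snd (fst z)) x' < \<delta> \<and>
      dist (snd (snd z)) xi' < min \<delta> (norm xi')) (nhds z0)"
    by eventually_elim blast
  with frequently_nhds_notin_if_notin_interior[OF not_zero[folded z0_def]]
  have "frequently (\<lambda>z. z \<notin> {z \<in> cotangent_minus_zero. q z = 0} \<and> q (line sm z) < 0 \<and>
      0 < q (line sp z) \<and> dist (fst (fst z)) t0 < \<delta> \<and> dist (snd (fst z)) x' < \<delta> \<and>
      dist (snd (snd z)) xi' < min \<delta> (norm xi')) (nhds z0)"
    by (rule frequently_eventually_frequently)
  then obtain z where "z \<notin> {z \<in> cotangent_minus_zero. q z = 0}" "q (line sm z) < 0"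
      "0 < q (line sp z)" "dist (fst (fst z)) t0 < \<delta>" "dist (snd (fst z)) x' < \<delta>"
      "dist (snd (snd z)) xi' < min \<delta> (norm xi')"
    using frequently_ex by blast
  moreover obtain t y \<eta> \<zeta> where "z = ((t, y), (\<eta>, \<zeta>))" by (metis prod.collapse)
  ultimately have z: "((t, y), (\<eta>, \<zeta>)) \<notin> {z \<in> cotangent_minus_zero. q z = 0}"
      "along q sm y \<zeta> < 0" "0 < along q sp y \<zeta>" "\<bar>t - t0\<bar> < \<delta>" "dist y x' < \<delta>"
      "dist \<zeta> xi' < min \<delta> (norm xi')"
    by (simp_all add: line_def along_def dist_real_def)
  have "\<zeta> \<noteq> 0" using z(6) by auto
  with z show ?thesis
    by (intro that[of \<zeta> t y \<eta>]) (auto simp: mem_cotangent_minus_zero)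
qed

lemma sign_change_bichar_near_if_not_locally_zero:
  fixes q :: "(real \<times> 'a::euclidean_space) \<times> (real \<times> 'a) \<Rightarrow> real"
  assumes cont: "continuous_on cotangent_minus_zero q"
    and indep: "\<And>x1 y xi1 eta zeta.
        ((x1, y), (xi1, zeta)) \<in> cotangent_minus_zero \<Longrightarrow>
        ((x1, y), (eta, zeta)) \<in> cotangent_minus_zero \<Longrightarrow>
        q ((x1, y), (xi1, zeta)) = q ((x1, y), (eta, zeta))"
    and sc: "strongly_changes_sign q a b x' xi'" and "xi' \<noteq> 0"
    and "0 < \<kappa>" and t0: "t0 \<in> {a + \<kappa>..b - \<kappa>}"
    and not_zero: "((t0, x'), (0, xi')) \<notin> interior {z \<in> cotangent_minus_zero. q z = 0}"
    and "0 < r"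
  shows "sign_change_bichar_near q a b x' xi' (b - a - \<kappa>) r"
proof -
  obtain sm sp where ss: "a - r/2 < sm" "sm < a" "b < sp" "sp < b + r/2"
      "q ((sm, x'), (0, xi')) < 0" "0 < q ((sp, x'), (0, xi'))"
    using sc \<open>0 < r\<close> unfolding strongly_changes_sign_def along_def by (meson half_gt_zero)
  have "0 < min (r/2) \<kappa>" using \<open>0 < r\<close> \<open>0 < \<kappa>\<close> by simp
  then obtain t y \<eta> \<zeta> where z: "\<zeta> \<noteq> 0" "q ((t, y), (\<eta>, \<zeta>)) \<noteq> 0"
      "along q sm y \<zeta> < 0" "0 < along q sp y \<zeta>" "\<bar>t - t0\<bar> < min (r/2) \<kappa>"
      "dist y x' < min (r/2) \<kappa>" "dist \<zeta> xi' < min (r/2) \<kappa>"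
    by (rule nonzero_point_with_sign_change_nearby[OF cont \<open>xi' \<noteq> 0\<close> ss(5,6) not_zero])
  have "\<bar>t - t0\<bar> < r/2" "\<bar>t - t0\<bar> < \<kappa>" using z(5) by simp_all
  then have t: "t0 - r/2 < t" "t < t0 + r/2" "a < t" "t < b"
    using t0 unfolding abs_less_iff by auto
  have "q ((t, y), (\<eta>, \<zeta>)) = q ((t, y), (0, \<zeta>))"
    by (rule indep) (simp_all add: mem_cotangent_minus_zero z(1))
  with z(2) have "along q t y \<zeta> \<noteq> 0" by (simp add: along_def)
  moreover have "continuous_on {sm..sp} (\<lambda>s. along q s y \<zeta>)"
    unfolding along_def using z(1) mem_cotangent_minus_zero
    by (intro continuous_on_compose2[OF cont] continuous_intros) auto
  moreover have "sm \<le> t" "t \<le> sp" using t ss(2,3) by auto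
  ultimately obtain c d where cd: "c \<le> d" "sm \<le> c \<and> d \<le> t \<or> t \<le> c \<and> d \<le> sp"
      "strongly_changes_sign q c d y \<zeta>"
    using strongly_changes_sign_between z(3,4) by blast
  have "a - r < c" "d < b + r" "d - c \<le> b - a - \<kappa> + r"
    using cd(2) t t0 ss(1-4) by auto
  moreover have "dist y x' < r" "dist \<zeta> xi' < r" using z(6,7) \<open>0 < r\<close> by auto
  ultimately show ?thesis
    unfolding sign_change_bichar_near_def bichar_def
    using cd(1,3) z(1)
    by (intro exI[of _ c] exI[of _ d] exI[of _ y] exI[of _ \<zeta>]) auto
qed

text \<open>The hypothesis \<open>\<rho> < (b - a) / 2\<close> only makes \<open>I\<^sub>\<kappa>\<close> possibly nonempty; the proof does not use it.\<close>

theorem proposition2p16: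
  fixes q :: "(real \<times> 'a::euclidean_space) \<times> (real \<times> 'a) \<Rightarrow> real"
    and a b \<rho> :: real and x' xi' :: 'a
  assumes smooth: "smooth_on cotangent_minus_zero q"
    and bic: "bichar a b x' xi'"
    and sc: "strongly_changes_sign q a b x' xi'"
    and rho_pos: "0 < \<rho>" and "\<rho> < (b - a) / 2"
    and Lp_ge: "Lp q a b x' xi' \<ge> ereal (b - a - \<rho>)"
    and indep: "\<And>x1 y xi1 eta zeta.
        ((x1, y), (xi1, zeta)) \<in> cotangent_minus_zero \<Longrightarrow>
        ((x1, y), (eta, zeta)) \<in> cotangent_minus_zero \<Longrightarrow>
        q ((x1, y), (xi1, zeta)) = q ((x1, y), (eta, zeta))"
  shows "\<forall>\<kappa>>\<rho>. \<exists>U. open U \<and> U \<subseteq> cotangent_minus_zero \<and>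
           {((t, x'), (0, xi')) | t. t \<in> {a + \<kappa> .. b - \<kappa>}} \<subseteq> U \<and>
           (\<forall>z\<in>U. q z = 0)"
proof (intro allI impI)
  fix \<kappa> assume "\<rho> < \<kappa>"
  let ?Z = "{z \<in> cotangent_minus_zero. q z = 0}"
  have "q differentiable_on cotangent_minus_zero"
    using smooth unfolding smooth_on_def by (metis iter_dderiv.simps(1))
  then have cont: "continuous_on cotangent_minus_zero q"
    by (rule differentiable_imp_continuous_on)
  have "{((t, x'), (0, xi')) | t. t \<in> {a + \<kappa>..b - \<kappa>}} \<subseteq> interior ?Z"
  proof (rule ccontr)
    assume "\<not> ?thesis"
    then obtain t0 where t0: "t0 \<in> {a + \<kappa>..b - \<kappa>}" "((t0, x'), (0, xi')) \<notin> interior ?Z"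
      by blast
    have "Lp q a b x' xi' \<le> ereal (b - a - \<kappa>)"
      using sign_change_bichar_near_if_not_locally_zero[OF cont indep sc _ _ t0] bic rho_pos \<open>\<rho> < \<kappa>\<close>
      unfolding bichar_def by (intro Lp_le_if_sign_change_bichar_near) auto
    then have "ereal (b - a - \<rho>) \<le> ereal (b - a - \<kappa>)"
      using Lp_ge by (rule order_trans[rotated])
    then show False using \<open>\<rho> < \<kappa>\<close> by simp
  qed
  then show "\<exists>U. open U \<and> U \<subseteq> cotangent_minus_zero \<and>
      {((t, x'), (0, xi')) | t. t \<in> {a + \<kappa>..b - \<kappa>}} \<subseteq> U \<and> (\<forall>z\<in>U. q z = 0)"
    using interior_subset[of ?Z] by (intro exI[of _ "interior ?Z"]) auto
qed

end
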